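(* Let $\mathit{VI}$ be a finite set of variables with $\#\mathit{VI}=n$. If $j,k\in\mathbb{N}$ with $1\le j<k\le n$, then $\mathrm{MI}(\mathit{TSD}_k)\cap\mathit{TS}_j=\{\mathit{SG}\}$.
   Context: $\mathit{SG}=\wp(\mathit{VI})\setminus\{\emptyset\}$, $\mathit{SH}=\wp(\mathit{SG})$ ordered by inclusion. $\mathrm{tuples}_j(S)=\{T\subseteq S\mid\#T=j\}$, $\mathrm{tuples}_j(sh)=\bigcup_{S'\in sh}\mathrm{tuples}_j(S')$, $\rho_{\mathit{TS}_j}(sh)=\{S\in\mathit{SG}\mid\mathrm{tuples}_j(S)\subseteq\mathrm{tuples}_j(sh)\}$, $\mathit{TS}_j=\rho_{\mathit{TS}_j}(\mathit{SH})$. $\rho_{\mathit{TSD}_k}(sh)=\{\,S\in\mathit{SG}\mid \forall T\subseteq S:\ \#T<k\implies S=\bigcup\{U\in sh\mid T\subseteq U\subseteq S\}\,\}$, $\mathit{TSD}_k=\rho_{\mathit{TSD}_k}(\mathit{SH})$ (complete lattice under inclusion, meet = intersection). $\mathrm{MI}(C)$ denotes the meet-irreducible elements of a complete lattice $C$: $x$ such that $x=y\wedge z$ implies $x=y$ or $x=z$. *)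

theory Defs
  imports Main
begin

definition SG :: "'a set \<Rightarrow> 'a set set" where
  "SG VI = Pow VI - {{}}"

definition SH :: "'a set \<Rightarrow> 'a set set set" where
  "SH VI = Pow (SG VI)"

definition tuples :: "nat \<Rightarrow> 'a set \<Rightarrow> 'a set set" where
  "tuples j S = {T. T \<subseteq> S \<and> card T = j}"

definition tuples_sh :: "nat \<Rightarrow> 'a set set \<Rightarrow> 'a set set" where
  "tuples_sh j sh = (\<Union>S'\<in>sh. tuples j S')"

definition rho_TS :: "nat \<Rightarrow> 'a set \<Rightarrow> 'a set set \<Rightarrow> 'a set set" where
  "rho_TS j VI sh = {S \<in> SG VI. tuples j S \<subseteq> tuples_sh j sh}"

definition TS :: "nat \<Rightarrow> 'a set \<Rightarrow> 'a set set set" where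
  "TS j VI = rho_TS j VI ` SH VI"

definition rho_TSD :: "nat \<Rightarrow> 'a set \<Rightarrow> 'a set set \<Rightarrow> 'a set set" where
  "rho_TSD k VI sh = {S \<in> SG VI. \<forall>T. T \<subseteq> S \<and> card T < k \<longrightarrow>
       S = \<Union>{U \<in> sh. T \<subseteq> U \<and> U \<subseteq> S}}"

definition TSD :: "nat \<Rightarrow> 'a set \<Rightarrow> 'a set set set" where
  "TSD k VI = rho_TSD k VI ` SH VI"

definition is_meet :: "'b set set \<Rightarrow> 'b set \<Rightarrow> 'b set \<Rightarrow> 'b set \<Rightarrow> bool" where
  "is_meet C y z x \<longleftrightarrow> x \<in> C \<and> x \<subseteq> y \<and> x \<subseteq> z \<and>
     (\<forall>w\<in>C. w \<subseteq> y \<and> w \<subseteq> z \<longrightarrow> w \<subseteq> x)"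

definition MI :: "'b set set \<Rightarrow> 'b set set" where
  "MI C = {x \<in> C. \<forall>y\<in>C. \<forall>z\<in>C. is_meet C y z x \<longrightarrow> x = y \<or> x = z}"

end

theory Submission
  imports Defs
begin

text \<open>
  \<open>SG\<close> is the top of \<open>TSD\<^sub>k\<close>, hence meet-irreducible, and it lies in \<open>TS\<^sub>j\<close>. Conversely let
  \<open>x \<noteq> SG\<close> lie in \<open>TS\<^sub>j\<close>. Then some \<open>j\<close>-tuple \<open>T\<close> is contained in no member of \<open>x\<close>; as
  \<open>j < n\<close> there is a variable \<open>v \<notin> T\<close>. Adding a set \<open>A\<close> to a \<open>\<rho>\<^sub>T\<^sub>S\<^sub>D\<^sub>k\<close>-closed family can
  only force proper supersets of \<open>A\<close> into the closure, so \<open>x \<union> {VI}\<close> is closed, and so is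
  \<open>x \<union> {VI - {v}}\<close>: its only candidate \<open>VI\<close> is not generated around the tuple \<open>T\<close> (of size
  \<open>j < k\<close>), because no member containing \<open>T\<close> contains \<open>v\<close>. The two families meet in \<open>x\<close>,
  so \<open>x\<close> is not meet-irreducible.
\<close>

lemma greatest_in_MI:
  assumes "t \<in> C" and "\<forall>w\<in>C. w \<subseteq> t"
  shows "t \<in> MI C"
  using assms unfolding MI_def is_meet_def by blast

lemma MI_inter:
  assumes "x \<in> MI C" and "y \<in> C" and "z \<in> C" and "x = y \<inter> z"
  shows "x = y \<or> x = z"
proof -
  have "is_meet C y z x"
    using assms(1,4) unfolding MI_def is_meet_def by auto
  then show ?thesis using assms(1-3) unfolding MI_def by blast
qed

lemma rho_TSD_subset_SG: "rho_TSD k VI sh \<subseteq> SG VI"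
  unfolding rho_TSD_def by auto

lemma subset_rho_TSD: "sh \<subseteq> SG VI \<Longrightarrow> sh \<subseteq> rho_TSD k VI sh"
  unfolding rho_TSD_def by blast

lemma rho_TSD_generated:
  assumes "S \<in> rho_TSD k VI sh" and "T \<subseteq> S" and "card T < k"
  shows "S = \<Union>{U \<in> sh. T \<subseteq> U \<and> U \<subseteq> S}"
  using assms unfolding rho_TSD_def by blast

lemma rho_TSD_rho_TSD_subset: "rho_TSD k VI (rho_TSD k VI sh) \<subseteq> rho_TSD k VI sh"
proof
  fix S assume S: "S \<in> rho_TSD k VI (rho_TSD k VI sh)"
  have "S \<subseteq> \<Union>{U \<in> sh. T \<subseteq> U \<and> U \<subseteq> S}" if T: "T \<subseteq> S" "card T < k" for T
  proof
    fix v assume "v \<in> S"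
    then obtain U where U: "U \<in> rho_TSD k VI sh" "T \<subseteq> U" "U \<subseteq> S" "v \<in> U"
      using rho_TSD_generated[OF S T] by blast
    then obtain U' where "U' \<in> sh" "T \<subseteq> U'" "U' \<subseteq> U" "v \<in> U'"
      using rho_TSD_generated[OF U(1,2) T(2)] by blast
    then show "v \<in> \<Union>{U \<in> sh. T \<subseteq> U \<and> U \<subseteq> S}"
      using U(3) by blast
  qed
  moreover have "S \<in> SG VI"
    using S rho_TSD_subset_SG by blast
  ultimately show "S \<in> rho_TSD k VI sh"
    unfolding rho_TSD_def by blast
qed

lemma TSD_iff: "x \<in> TSD k VI \<longleftrightarrow> x \<subseteq> SG VI \<and> rho_TSD k VI x \<subseteq> x"
proof
  assume "x \<in> TSD k VI"
  then obtain sh where "x = rho_TSD k VI sh"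
    unfolding TSD_def by auto
  then show "x \<subseteq> SG VI \<and> rho_TSD k VI x \<subseteq> x"
    using rho_TSD_subset_SG rho_TSD_rho_TSD_subset by blast
next
  assume "x \<subseteq> SG VI \<and> rho_TSD k VI x \<subseteq> x"
  then have "x \<subseteq> SG VI" and "x = rho_TSD k VI x"
    using subset_rho_TSD by blast+
  then show "x \<in> TSD k VI"
    unfolding TSD_def SH_def by blast
qed

lemma SG_in_TSD: "SG VI \<in> TSD k VI"
  unfolding TSD_iff by (auto simp: rho_TSD_def)

lemma SG_in_MI_TSD: "SG VI \<in> MI (TSD k VI)"
  by (rule greatest_in_MI[OF SG_in_TSD]) (simp add: TSD_iff)

text \<open>Members of the closure that do not contain \<open>A\<close> are generated without using \<open>A\<close>.\<close>
lemma rho_TSD_insert_subset: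
  assumes "rho_TSD k VI x \<subseteq> x"
  shows "rho_TSD k VI (insert A x) \<subseteq> insert A x \<union> {S \<in> SG VI. A \<subset> S}"
proof
  fix S assume S: "S \<in> rho_TSD k VI (insert A x)"
  show "S \<in> insert A x \<union> {S \<in> SG VI. A \<subset> S}"
  proof (cases "A \<subseteq> S")
    case True
    then show ?thesis using S unfolding rho_TSD_def by auto
  next
    case False
    then have "\<And>T. {U \<in> insert A x. T \<subseteq> U \<and> U \<subseteq> S} = {U \<in> x. T \<subseteq> U \<and> U \<subseteq> S}"
      by auto
    then have "S \<in> rho_TSD k VI x" using S unfolding rho_TSD_def by simp
    then show ?thesis using assms by auto
  qed
qed

lemma insert_top_in_TSD:
  assumes "x \<in> TSD k VI" and "VI \<noteq> {}"
  shows "insert VI x \<in> TSD k VI"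
  using assms rho_TSD_insert_subset[of k VI x VI]
  unfolding TSD_iff by (auto simp: SG_def)

lemma insert_coatom_in_TSD:
  assumes x: "x \<in> TSD k VI" and v: "v \<in> VI"
    and T: "T \<subseteq> VI - {v}" "T \<noteq> {}" "card T < k"
    and uncovered: "\<forall>U\<in>x. \<not> T \<subseteq> U"
  shows "insert (VI - {v}) x \<in> TSD k VI"
proof -
  let ?z = "insert (VI - {v}) x"
  have "VI \<notin> rho_TSD k VI ?z"
  proof
    assume "VI \<in> rho_TSD k VI ?z"
    moreover have "T \<subseteq> VI" using T(1) by blast
    ultimately have "VI = \<Union>{U \<in> ?z. T \<subseteq> U \<and> U \<subseteq> VI}"
      using T(3) by (rule rho_TSD_generated)
    then have "v \<in> \<Union>{U \<in> ?z. T \<subseteq> U \<and> U \<subseteq> VI}"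
      using v by (rule subst)
    then obtain U where "U \<in> ?z" "T \<subseteq> U" "v \<in> U"
      by blast
    then show False using uncovered by blast
  qed
  moreover have "{S \<in> SG VI. VI - {v} \<subset> S} = {VI}"
    using v unfolding SG_def by auto
  moreover have "rho_TSD k VI x \<subseteq> x"
    using x unfolding TSD_iff by blast
  ultimately have "rho_TSD k VI ?z \<subseteq> ?z"
    using rho_TSD_insert_subset[of k VI x "VI - {v}"] by auto
  moreover have "?z \<subseteq> SG VI"
    using x T unfolding TSD_iff SG_def by auto
  ultimately show ?thesis
    unfolding TSD_iff by blast
qed

lemma SG_in_TS: "SG VI \<in> TS j VI"
proof -
  have "rho_TS j VI (SG VI) = SG VI"
    unfolding rho_TS_def tuples_sh_def by blast
  then show ?thesis unfolding TS_def SH_def by force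
qed

lemma TS_uncovered_tuple:
  assumes "x \<in> TS j VI" and "x \<noteq> SG VI"
  obtains T where "T \<subseteq> VI" "card T = j" "\<forall>U\<in>x. \<not> T \<subseteq> U"
proof -
  obtain sh where x: "x = rho_TS j VI sh"
    using assms(1) unfolding TS_def by auto
  have "x \<subseteq> SG VI" unfolding x rho_TS_def by auto
  with assms(2) obtain S where S: "S \<in> SG VI" "S \<notin> x" by blast
  then obtain T where T: "T \<in> tuples j S" "T \<notin> tuples_sh j sh"
    unfolding x rho_TS_def by auto
  have "\<not> T \<subseteq> U" if "U \<in> x" for U
  proof
    assume "T \<subseteq> U"
    then have "T \<in> tuples j U" using T(1) unfolding tuples_def by auto
    then show False using that T(2) unfolding x rho_TS_def by auto
  qed
  moreover have "T \<subseteq> VI" "card T = j"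
    using S(1) T(1) unfolding SG_def tuples_def by auto
  ultimately show thesis using that by blast
qed

theorem corollary4p5:
  fixes VI :: "'a set" and n j k :: nat
  assumes "finite VI" and "card VI = n"
    and "1 \<le> j" and "j < k" and "k \<le> n"
  shows "MI (TSD k VI) \<inter> TS j VI = {SG VI}"
proof -
  have "x = SG VI" if MI: "x \<in> MI (TSD k VI)" and TS: "x \<in> TS j VI" for x
  proof (rule ccontr)
    assume "x \<noteq> SG VI"
    with TS obtain T where T: "T \<subseteq> VI" "card T = j" "\<forall>U\<in>x. \<not> T \<subseteq> U"
      by (rule TS_uncovered_tuple)
    have "T \<noteq> VI" and "T \<noteq> {}" using T(2) assms by auto
    with T(1) obtain v where v: "v \<in> VI" "v \<notin> T" by blast
    have x: "x \<in> TSD k VI" using MI unfolding MI_def by blast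
    have top: "insert VI x \<in> TSD k VI"
      using insert_top_in_TSD x v(1) by blast
    have coatom: "insert (VI - {v}) x \<in> TSD k VI"
      using insert_coatom_in_TSD[OF x v(1) _ \<open>T \<noteq> {}\<close>] T v assms(4) by blast
    have "VI \<notin> x" and "VI - {v} \<notin> x" using T v by auto
    moreover have "x = insert VI x \<inter> insert (VI - {v}) x"
      using \<open>VI \<notin> x\<close> v(1) by auto
    ultimately show False
      using MI_inter[OF MI top coatom] by auto
  qed
  then show ?thesis using SG_in_MI_TSD SG_in_TS by blast
qed

end
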